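(* Let $\mathbf P=(P,\leq,{}',0,1)$ be an orthocomplete atomic orthomodular poset. The following are equivalent: (i) $\mathbf P$ is pseudo-orthomodular; (ii) $\mathbf P$ is a complete orthomodular lattice; (iii) the Dedekind-MacNeille completion $\mathrm{DM}(\mathbf P)$ is orthomodular.
   Context: For $M\subseteq P$, $U(M)$, $L(M)$ are the sets of upper and lower bounds; $U(a,b)=U(\{a,b\})$ etc. A poset with complementation is a bounded poset with antitone involution $'$ ($x\le y\Rightarrow y'\le x'$, $x''=x$) with $L(x,x')=\{0\}$, $U(x,x')=\{1\}$. It is orthomodular if for all $x\le y'$ the join $x\vee y$ exists, and $((x\vee y)\wedge y')\vee y= x\vee y$ whenever the expressions are defined (with $x\wedge y=(x'\vee y')'$). It is pseudo-orthomodular if $L(U(L(x,y),y'),y)=L(x,y)$ for all $x,y$. A subset $S$ is orthogonal if $s\le t'$ for all distinct $s,t\in S$; $\mathbf P$ is orthocomplete if every orthogonal subset has a join in $\mathbf P$. An atom is a minimal element of $P\setminus\{0\}$; $\mathbf P$ is atomic if every $b>0$ lies above some atom. The Dedekind-MacNeille completion $\mathrm{DM}(\mathbf P)$ is the complete lattice of subsets $B$ with $L(U(B))=B$ under inclusion, with involution $X'=L(\{u'\mid u\in X\})$; a lattice with complementation is orthomodular if $x\vee y=((x\vee y)\wedge y')\vee y$. *)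

theory Defs
  imports Main
begin

text \<open>Posets are modelled by a type of class order (the whole type is the poset P).
 The complementation is a function cmp, the bounds are bot0 and top1.\<close>

definition UB :: "'a::order set \<Rightarrow> 'a set" where
  "UB M = {u. \<forall>x\<in>M. x \<le> u}"

definition LB :: "'a::order set \<Rightarrow> 'a set" where
  "LB M = {l. \<forall>x\<in>M. l \<le> x}"

definition is_lub_in :: "'b set \<Rightarrow> ('b \<Rightarrow> 'b \<Rightarrow> bool) \<Rightarrow> 'b set \<Rightarrow> 'b \<Rightarrow> bool" where
  "is_lub_in D le M j \<longleftrightarrow> j \<in> D \<and> (\<forall>x\<in>M. le x j) \<and>
     (\<forall>u\<in>D. (\<forall>x\<in>M. le x u) \<longrightarrow> le j u)"

definition is_glb_in :: "'b set \<Rightarrow> ('b \<Rightarrow> 'b \<Rightarrow> bool) \<Rightarrow> 'b set \<Rightarrow> 'b \<Rightarrow> bool" where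
  "is_glb_in D le M m \<longleftrightarrow> m \<in> D \<and> (\<forall>x\<in>M. le m x) \<and>
     (\<forall>l\<in>D. (\<forall>x\<in>M. le l x) \<longrightarrow> le l m)"

definition poset_with_complementation :: "('a::order \<Rightarrow> 'a) \<Rightarrow> 'a \<Rightarrow> 'a \<Rightarrow> bool" where
  "poset_with_complementation cmp bot0 top1 \<longleftrightarrow>
     (\<forall>x. bot0 \<le> x \<and> x \<le> top1) \<and>
     (\<forall>x y. x \<le> y \<longrightarrow> cmp y \<le> cmp x) \<and>
     (\<forall>x. cmp (cmp x) = x) \<and>
     (\<forall>x. LB {x, cmp x} = {bot0}) \<and>
     (\<forall>x. UB {x, cmp x} = {top1})"

definition is_join :: "'a::order \<Rightarrow> 'a \<Rightarrow> 'a \<Rightarrow> bool" where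
  "is_join x y j \<longleftrightarrow> is_lub_in UNIV (\<le>) {x, y} j"

definition is_meet_c :: "('a::order \<Rightarrow> 'a) \<Rightarrow> 'a \<Rightarrow> 'a \<Rightarrow> 'a \<Rightarrow> bool" where
  "is_meet_c cmp x y m \<longleftrightarrow> is_join (cmp x) (cmp y) (cmp m)"

definition orthomodular_poset :: "('a::order \<Rightarrow> 'a) \<Rightarrow> 'a \<Rightarrow> 'a \<Rightarrow> bool" where
  "orthomodular_poset cmp bot0 top1 \<longleftrightarrow>
     poset_with_complementation cmp bot0 top1 \<and>
     (\<forall>x y. x \<le> cmp y \<longrightarrow> (\<exists>j. is_join x y j)) \<and>
     (\<forall>x y j m k. x \<le> cmp y \<longrightarrow> is_join x y j \<longrightarrow> is_meet_c cmp j (cmp y) m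
        \<longrightarrow> is_join m y k \<longrightarrow> k = j)"

definition pseudo_orthomodular :: "('a::order \<Rightarrow> 'a) \<Rightarrow> bool" where
  "pseudo_orthomodular cmp \<longleftrightarrow>
     (\<forall>x y. LB (UB (LB {x, y} \<union> {cmp y}) \<union> {y}) = LB {x, y})"

definition orthogonal_set :: "('a::order \<Rightarrow> 'a) \<Rightarrow> 'a set \<Rightarrow> bool" where
  "orthogonal_set cmp S \<longleftrightarrow> (\<forall>s\<in>S. \<forall>t\<in>S. s \<noteq> t \<longrightarrow> s \<le> cmp t)"

definition orthocomplete :: "('a::order \<Rightarrow> 'a) \<Rightarrow> bool" where
  "orthocomplete cmp \<longleftrightarrow>
     (\<forall>S. orthogonal_set cmp S \<longrightarrow> (\<exists>j. is_lub_in UNIV (\<le>) S j))"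

definition is_atom :: "'a::order \<Rightarrow> 'a \<Rightarrow> bool" where
  "is_atom bot0 a \<longleftrightarrow> a \<noteq> bot0 \<and> (\<forall>b. b \<noteq> bot0 \<and> b \<le> a \<longrightarrow> b = a)"

definition atomic :: "'a::order \<Rightarrow> bool" where
  "atomic bot0 \<longleftrightarrow> (\<forall>b. bot0 < b \<longrightarrow> (\<exists>a. is_atom bot0 a \<and> a \<le> b))"

definition orthomodular_lattice_on :: "'b set \<Rightarrow> ('b \<Rightarrow> 'b \<Rightarrow> bool) \<Rightarrow> ('b \<Rightarrow> 'b) \<Rightarrow> bool" where
  "orthomodular_lattice_on D le cmp \<longleftrightarrow>
     (\<forall>x\<in>D. \<forall>y\<in>D. \<forall>j m k. is_lub_in D le {x, y} j \<longrightarrow> is_glb_in D le {j, cmp y} m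
        \<longrightarrow> is_lub_in D le {m, y} k \<longrightarrow> k = j)"

definition complete_lattice_poset :: "'a::order itself \<Rightarrow> bool" where
  "complete_lattice_poset _ \<longleftrightarrow> (\<forall>M :: 'a set. \<exists>j. is_lub_in UNIV (\<le>) M j)"

definition DM_carrier :: "'a::order set set" where
  "DM_carrier = {B. LB (UB B) = B}"

definition DM_compl :: "('a::order \<Rightarrow> 'a) \<Rightarrow> 'a set \<Rightarrow> 'a set" where
  "DM_compl cmp X = LB (cmp ` X)"

end

theory Submission
  imports Defs
begin

text \<open>
  In an orthocomplete atomic poset every set \<open>M\<close> has a lower bound \<open>s\<close>, the join of a maximal
  orthogonal set of atoms below \<open>M\<close>, such that no nonzero lower bound of \<open>M\<close> is orthogonal
  to \<open>s\<close>. For \<open>M = {x, y}\<close> pseudo-orthomodularity shows that \<open>s\<close> is the meet of \<open>x\<close> and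
  \<open>y\<close>: every lower bound \<open>q\<close> lies below \<open>v = s \<or> y'\<close>, since otherwise \<open>q \<or> v\<close> would have a
  nonzero part below \<open>v' \<le> y\<close>, which pseudo-orthomodularity makes a lower bound of \<open>x\<close> and
  \<open>y\<close> orthogonal to \<open>s\<close>; and \<open>v \<and> y = s\<close>. Once binary meets exist, the orthomodular law
  \<open>(q \<or> s) \<and> s' = 0 \<Longrightarrow> q \<or> s = s\<close> shows that \<open>s\<close> is the infimum of an arbitrary \<open>M\<close>, so \<open>P\<close>
  is complete.

  A complete lattice is isomorphic to its Dedekind-MacNeille completion via \<open>x \<mapsto> L(x)\<close>, and
  the isomorphism commutes with the involutions. Conversely, pseudo-orthomodularity at \<open>(x, y)\<close>
  is the complement of the orthomodular law of the completion at \<open>L(x, y)'\<close> and \<open>L(y')\<close>.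
\<close>

lemma subset_LB_UB: "N \<subseteq> LB (UB N)"
  by (auto simp: LB_def UB_def)

lemma subset_UB_LB: "N \<subseteq> UB (LB N)"
  by (auto simp: LB_def UB_def)

lemma UB_antimono: "N \<subseteq> N' \<Longrightarrow> UB N' \<subseteq> UB N"
  by (auto simp: UB_def)

lemma LB_antimono: "N \<subseteq> N' \<Longrightarrow> LB N' \<subseteq> LB N"
  by (auto simp: LB_def)

lemma LB_UB_LB [simp]: "LB (UB (LB N)) = LB N"
  by (meson subset_LB_UB subset_UB_LB LB_antimono subset_antisym)

lemma UB_LB_UB [simp]: "UB (LB (UB N)) = UB N"
  by (meson subset_LB_UB subset_UB_LB UB_antimono subset_antisym)

lemma LB_Un: "LB (M \<union> N) = LB M \<inter> LB N"
  by (auto simp: LB_def)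

lemma LB_UB_singleton [simp]: "LB (UB {a}) = LB {a}"
  by (auto simp: LB_def UB_def intro: order_trans)

lemma UB_LB_singleton [simp]: "UB (LB {a}) = UB {a}"
  by (auto simp: LB_def UB_def intro: order_trans)

lemma LB_insert_UB_singleton [simp]: "LB (insert b (UB {a})) = LB {a, b}"
  by (auto simp: LB_def UB_def intro: order_trans)

lemma UB_insert_LB_singleton [simp]: "UB (insert b (LB {a})) = UB {a, b}"
  by (auto simp: LB_def UB_def intro: order_trans)

lemma LB_singleton_subset_iff: "LB {a} \<subseteq> LB N \<longleftrightarrow> a \<in> LB N"
  by (auto simp: LB_def intro: order_trans)

lemma LB_singleton_subset_singleton_iff [simp]: "LB {a} \<subseteq> LB {b} \<longleftrightarrow> (a::'a::order) \<le> b"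
  unfolding LB_singleton_subset_iff by (simp add: LB_def)

lemma LB_singleton_eq_iff [simp]: "LB {a} = LB {b} \<longleftrightarrow> (a::'a::order) = b"
  by (metis LB_singleton_subset_singleton_iff order_antisym order_refl)

lemma is_lub_in_UNIV_iff: "is_lub_in UNIV (\<le>) M j \<longleftrightarrow> UB M = UB {j}"
  unfolding is_lub_in_def UB_def set_eq_iff by (auto intro: order_trans)

lemma is_glb_in_UNIV_iff: "is_glb_in UNIV (\<le>) M m \<longleftrightarrow> LB M = LB {m}"
  unfolding is_glb_in_def LB_def set_eq_iff by (auto intro: order_trans)

lemma complete_lattice_posetI:
  assumes "\<And>N :: 'a::order set. \<exists>m. is_glb_in UNIV (\<le>) N m"
  shows "complete_lattice_poset TYPE('a)"
  unfolding complete_lattice_poset_def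
proof
  fix M :: "'a set"
  obtain m where "is_glb_in UNIV (\<le>) (UB M) m"
    using assms by blast
  then have "is_lub_in UNIV (\<le>) M m"
    by (metis UB_LB_UB UB_LB_singleton is_glb_in_UNIV_iff is_lub_in_UNIV_iff)
  then show "\<exists>j. is_lub_in UNIV (\<le>) M j" ..
qed

lemma is_lub_in_image_iff:
  assumes "\<And>a b. a \<in> D \<Longrightarrow> b \<in> D \<Longrightarrow> le' (f a) (f b) \<longleftrightarrow> le a b"
    and "M \<subseteq> D" and "j \<in> D"
  shows "is_lub_in (f ` D) le' (f ` M) (f j) \<longleftrightarrow> is_lub_in D le M j"
  using assms unfolding is_lub_in_def by (auto simp: subset_iff)

lemma is_glb_in_image_iff:
  assumes "\<And>a b. a \<in> D \<Longrightarrow> b \<in> D \<Longrightarrow> le' (f a) (f b) \<longleftrightarrow> le a b"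
    and "M \<subseteq> D" and "j \<in> D"
  shows "is_glb_in (f ` D) le' (f ` M) (f j) \<longleftrightarrow> is_glb_in D le M j"
  using assms unfolding is_glb_in_def by (auto simp: subset_iff)

lemma orthomodular_lattice_onD:
  assumes "orthomodular_lattice_on D le cmp" and "x \<in> D" and "y \<in> D"
    and "is_lub_in D le {x, y} j" and "is_glb_in D le {j, cmp y} m" and "is_lub_in D le {m, y} k"
  shows "k = j"
  using assms unfolding orthomodular_lattice_on_def by blast

lemma orthomodular_lattice_on_image:
  assumes law: "orthomodular_lattice_on D le cmp"
    and emb: "\<And>a b. a \<in> D \<Longrightarrow> b \<in> D \<Longrightarrow> le' (f a) (f b) \<longleftrightarrow> le a b"
    and cmp_closed: "\<And>a. a \<in> D \<Longrightarrow> cmp a \<in> D"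
    and cmp_image: "\<And>a. a \<in> D \<Longrightarrow> cmp' (f a) = f (cmp a)"
  shows "orthomodular_lattice_on (f ` D) le' cmp'"
  unfolding orthomodular_lattice_on_def
proof (intro ballI allI impI)
  fix X Y J M K
  assume "X \<in> f ` D" and "Y \<in> f ` D"
    and J: "is_lub_in (f ` D) le' {X, Y} J"
    and M: "is_glb_in (f ` D) le' {J, cmp' Y} M"
    and K: "is_lub_in (f ` D) le' {M, Y} K"
  then obtain x y j m k where xy: "x \<in> D" "y \<in> D" "X = f x" "Y = f y"
    and jmk: "j \<in> D" "m \<in> D" "k \<in> D" "J = f j" "M = f m" "K = f k"
    unfolding is_lub_in_def is_glb_in_def by blast
  have "is_lub_in D le {x, y} j"
    using J is_lub_in_image_iff[of D le' f le, OF emb, of "{x, y}" j] xy jmk by simp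
  moreover have "is_glb_in D le {j, cmp y} m"
    using M is_glb_in_image_iff[of D le' f le, OF emb, of "{j, cmp y}" m] xy jmk cmp_closed cmp_image by simp
  moreover have "is_lub_in D le {m, y} k"
    using K is_lub_in_image_iff[of D le' f le, OF emb, of "{m, y}" k] xy jmk by simp
  ultimately have "k = j"
    by (rule orthomodular_lattice_onD[OF law xy(1,2)])
  then show "K = J"
    using jmk by simp
qed

lemma LB_in_DM_carrier [simp]: "LB N \<in> DM_carrier"
  by (simp add: DM_carrier_def)

lemma DM_carrier_Int:
  assumes "X \<in> DM_carrier" and "Y \<in> DM_carrier"
  shows "X \<inter> Y \<in> DM_carrier"
proof -
  have "X \<inter> Y = LB (UB X \<union> UB Y)"
    using assms by (simp add: DM_carrier_def LB_Un)
  then show ?thesis by simp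
qed

lemma is_lub_in_DM_carrier: "is_lub_in DM_carrier (\<subseteq>) {X, Y} (LB (UB (X \<union> Y)))"
  unfolding is_lub_in_def
proof (intro conjI ballI impI)
  show "LB (UB (X \<union> Y)) \<in> DM_carrier" by simp
  show "W \<subseteq> LB (UB (X \<union> Y))" if "W \<in> {X, Y}" for W
    using that subset_LB_UB[of "X \<union> Y"] by auto
  fix U assume "U \<in> DM_carrier" and "\<forall>W\<in>{X, Y}. W \<subseteq> U"
  then have "X \<union> Y \<subseteq> U" and "LB (UB U) = U" by (auto simp: DM_carrier_def)
  then show "LB (UB (X \<union> Y)) \<subseteq> U" by (metis LB_antimono UB_antimono)
qed

lemma is_glb_in_DM_carrier:
  "X \<in> DM_carrier \<Longrightarrow> Y \<in> DM_carrier \<Longrightarrow> is_glb_in DM_carrier (\<subseteq>) {X, Y} (X \<inter> Y)"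
  unfolding is_glb_in_def using DM_carrier_Int by auto

lemma DM_carrier_eq_range_if_complete:
  assumes "complete_lattice_poset TYPE('a::order)"
  shows "DM_carrier = range (\<lambda>x::'a. LB {x})"
proof (intro equalityI subsetI)
  fix X :: "'a set" assume "X \<in> DM_carrier"
  obtain j where "is_lub_in UNIV (\<le>) X j"
    using assms unfolding complete_lattice_poset_def by blast
  have "X = LB (UB X)"
    using \<open>X \<in> DM_carrier\<close> by (simp add: DM_carrier_def)
  also have "\<dots> = LB {j}"
    using \<open>is_lub_in UNIV (\<le>) X j\<close> by (simp add: is_lub_in_UNIV_iff)
  finally show "X \<in> range (\<lambda>x. LB {x})" by blast
qed auto

locale complemented_poset =
  fixes c :: "'a::order \<Rightarrow> 'a" and z t :: 'a
  assumes complementation: "poset_with_complementation c z t"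
begin

lemma bot_le: "z \<le> x" and le_top: "x \<le> t" and compl_antimono: "x \<le> y \<Longrightarrow> c y \<le> c x"
  and compl_compl [simp]: "c (c x) = x" and LB_compl_pair: "LB {x, c x} = {z}"
  using complementation unfolding poset_with_complementation_def by auto

lemma compl_le_compl_iff [simp]: "c x \<le> c y \<longleftrightarrow> y \<le> x"
  by (metis compl_antimono compl_compl)

lemma compl_le_swap: "c x \<le> y \<longleftrightarrow> c y \<le> x"
  by (metis compl_le_compl_iff compl_compl)

lemma le_compl_swap: "x \<le> c y \<longleftrightarrow> y \<le> c x"
  by (metis compl_le_compl_iff compl_compl)

lemma inj_compl: "inj c"
  by (metis injI compl_compl)

lemma compl_eq_compl_iff [simp]: "c x = c y \<longleftrightarrow> x = y"
  by (metis compl_compl)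

lemma compl_bot [simp]: "c z = t"
  by (metis antisym bot_le le_top le_compl_swap)

lemma image_compl_compl [simp]: "c ` c ` M = M"
  by (force simp: image_image)

lemma image_compl_UB: "c ` UB M = LB (c ` M)"
proof (intro equalityI subsetI)
  fix l assume "l \<in> LB (c ` M)"
  then have "c l \<in> UB M"
    by (auto simp: LB_def UB_def le_compl_swap)
  then have "c (c l) \<in> c ` UB M"
    by (rule imageI)
  then show "l \<in> c ` UB M" by simp
qed (auto simp: LB_def UB_def)

lemma image_compl_LB: "c ` LB M = UB (c ` M)"
  by (metis image_compl_UB image_compl_compl)

lemma is_lub_iff_is_glb_compl: "is_lub_in UNIV (\<le>) M j \<longleftrightarrow> is_glb_in UNIV (\<le>) (c ` M) (c j)"
  unfolding is_lub_in_UNIV_iff is_glb_in_UNIV_iff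
  by (metis image_compl_UB image_empty image_insert inj_compl inj_image_eq_iff)

lemma is_glb_iff_is_lub_compl: "is_glb_in UNIV (\<le>) M m \<longleftrightarrow> is_lub_in UNIV (\<le>) (c ` M) (c m)"
  by (simp add: is_lub_iff_is_glb_compl)

lemma atom_not_le_compl: "is_atom z a \<Longrightarrow> a \<le> s \<Longrightarrow> \<not> a \<le> c s"
  using LB_compl_pair[of s] unfolding is_atom_def LB_def by auto

lemma ex_maximal_orthogonal_atoms:
  "\<exists>S \<subseteq> W \<inter> Collect (is_atom z). orthogonal_set c S
     \<and> (\<forall>a\<in>W. is_atom z a \<longrightarrow> (\<forall>r\<in>S. a \<le> c r) \<longrightarrow> a \<in> S)"
proof -
  let ?A = "{S. S \<subseteq> W \<inter> Collect (is_atom z) \<and> pairwise (\<lambda>s r. s \<le> c r) S}"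
  have "\<forall>C\<in>chains ?A. \<Union>C \<in> ?A"
  proof
    fix C assume "C \<in> chains ?A"
    then have C: "C \<subseteq> ?A" "chain\<^sub>\<subseteq> C"
      by (simp_all add: chains_def)
    then have "pairwise (\<lambda>s r. s \<le> c r) (\<Union>C)"
      by (blast intro: pairwise_chain_Union)
    moreover have "\<Union>C \<subseteq> W \<inter> Collect (is_atom z)"
      using C(1) by blast
    ultimately show "\<Union>C \<in> ?A" by blast
  qed
  from Zorn_Lemma[OF this]
  obtain S where S: "S \<in> ?A" and S_max: "\<forall>X\<in>?A. S \<subseteq> X \<longrightarrow> X = S" ..
  have "a \<in> S" if "a \<in> W" "is_atom z a" "\<forall>r\<in>S. a \<le> c r" for a
  proof -
    have "insert a S \<in> ?A"
      using S that by (auto simp: pairwise_insert le_compl_swap)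
    then show ?thesis using S_max by blast
  qed
  then show ?thesis
    using S by (auto simp: orthogonal_set_def pairwise_def)
qed

lemma pseudo_orthomodularD:
  "pseudo_orthomodular c \<Longrightarrow> LB (UB (LB {x, y} \<union> {c y}) \<union> {y}) = LB {x, y}"
  unfolding pseudo_orthomodular_def by blast

lemma orthomodular_lattice_if_pseudo_orthomodular:
  assumes po: "pseudo_orthomodular c"
  shows "orthomodular_lattice_on UNIV (\<le>) c"
  unfolding orthomodular_lattice_on_def
proof (intro ballI allI impI)
  fix x y j m k
  assume j: "is_lub_in UNIV (\<le>) {x, y} j" and m: "is_glb_in UNIV (\<le>) {j, c y} m"
    and k: "is_lub_in UNIV (\<le>) {m, y} k"
  \<comment> \<open>At \<open>(x', y')\<close> the identity reads \<open>(j' \<or> y) \<and> y' = j'\<close>, the complement of \<open>m \<or> y = j\<close>.\<close>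
  have x'y': "LB {c x, c y} = LB {c j}"
    using j by (simp add: is_lub_iff_is_glb_compl is_glb_in_UNIV_iff)
  have "UB {c j, y} = UB {c m}"
    using m by (simp add: is_glb_iff_is_lub_compl is_lub_in_UNIV_iff)
  moreover have "LB {c m, c y} = LB {c k}"
    using k by (simp add: is_lub_iff_is_glb_compl is_glb_in_UNIV_iff)
  ultimately have "LB (UB (LB {c x, c y} \<union> {y}) \<union> {c y}) = LB {c k}"
    unfolding x'y' by simp
  then have "LB {c k} = LB {c j}"
    using pseudo_orthomodularD[OF po, of "c x" "c y"] x'y' by simp
  then show "k = j" by simp
qed

lemma pseudo_orthomodular_LB_sup_compl:
  assumes po: "pseudo_orthomodular c" and "s \<le> y" and v: "is_lub_in UNIV (\<le>) {s, c y} v"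
  shows "LB {v, y} = LB {s}"
proof -
  have "LB {s, y} = LB {s}"
    using \<open>s \<le> y\<close> by (auto simp: LB_def)
  moreover have "UB (LB {s} \<union> {c y}) = UB {v}"
    using v by (simp add: is_lub_in_UNIV_iff)
  ultimately show ?thesis
    using pseudo_orthomodularD[OF po, of s y] by simp
qed

text \<open>Pseudo-orthomodularity at \<open>(q', v')\<close>: the hypothesis forces \<open>(q' \<and> v') \<or> v = 1\<close>, whence \<open>v' \<le> q'\<close>.\<close>
lemma le_if_orthogonal_part_of_join_trivial:
  assumes po: "pseudo_orthomodular c" and trivial: "LB (UB {v, q}) \<inter> LB {c v} \<subseteq> {z}"
  shows "q \<le> v"
proof -
  have "UB (insert v (LB {c q, c v})) = {t}"
  proof (intro equalityI subsetI)
    fix f assume f: "f \<in> UB (insert v (LB {c q, c v}))"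
    have "c f \<in> LB (UB {v, q})"
    proof (unfold LB_def, intro CollectI ballI)
      fix g assume "g \<in> UB {v, q}"
      then have "c g \<in> LB {c q, c v}" by (auto simp: UB_def LB_def)
      then show "c f \<le> g" using f compl_le_swap by (auto simp: UB_def)
    qed
    moreover have "c f \<in> LB {c v}" using f by (auto simp: UB_def LB_def)
    ultimately have "c f = z" using trivial by blast
    then show "f \<in> {t}" by (metis compl_bot compl_compl singletonI)
  qed (auto simp: UB_def le_top)
  moreover have "LB {c v, t} = LB {c v}"
    by (auto simp: LB_def le_top)
  ultimately have "LB {c v} = LB {c q, c v}"
    using pseudo_orthomodularD[OF po, of "c q" "c v"] by simp
  then have "c v \<in> LB {c q, c v}"
    using LB_singleton_subset_iff by blast
  then show "q \<le> v" by (simp add: LB_def)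
qed

lemma DM_compl_eq: "DM_compl c X = c ` UB X"
  by (simp add: DM_compl_def image_compl_UB)

lemma DM_compl_LB_singleton: "DM_compl c (LB {y}) = LB {c y}"
  by (simp add: DM_compl_def image_compl_LB)

lemma UB_DM_compl:
  assumes "X \<in> DM_carrier"
  shows "UB (DM_compl c X) = c ` X"
proof -
  have "UB (DM_compl c X) = UB (c ` UB X)"
    by (simp add: DM_compl_eq)
  also have "\<dots> = c ` LB (UB X)"
    by (simp add: image_compl_LB)
  also have "\<dots> = c ` X"
    using assms by (simp add: DM_carrier_def)
  finally show ?thesis .
qed

lemma orthomodular_DM_if_complete:
  assumes complete: "complete_lattice_poset TYPE('a)"
    and law: "orthomodular_lattice_on UNIV (\<le>) c"
  shows "orthomodular_lattice_on DM_carrier (\<subseteq>) (DM_compl c)"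
proof -
  have "orthomodular_lattice_on (range (\<lambda>x. LB {x})) (\<subseteq>) (DM_compl c)"
    by (rule orthomodular_lattice_on_image[OF law]) (simp_all add: DM_compl_LB_singleton)
  then show ?thesis
    using DM_carrier_eq_range_if_complete[OF complete] by simp
qed

text \<open>The orthomodular law of the completion at \<open>A'\<close> and \<open>L(y') \<subseteq> A'\<close>, read through upper bounds.\<close>
lemma UB_eq_image_compl_if_orthomodular_DM:
  assumes law: "orthomodular_lattice_on DM_carrier (\<subseteq>) (DM_compl c)"
    and A: "A \<in> DM_carrier" "A \<subseteq> LB {y}"
  shows "UB ((DM_compl c A \<inter> LB {y}) \<union> LB {c y}) = c ` A"
proof -
  let ?A' = "DM_compl c A" and ?B = "(DM_compl c A \<inter> LB {y}) \<union> LB {c y}"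
  have A': "?A' \<in> DM_carrier" by (simp add: DM_compl_def)
  have "c y \<in> LB (c ` A)"
    using A(2) by (auto simp: LB_def)
  then have "LB {c y} \<subseteq> ?A'"
    by (simp add: DM_compl_def LB_singleton_subset_iff)
  then have "is_lub_in DM_carrier (\<subseteq>) {?A', LB {c y}} ?A'"
    using A' by (auto simp: is_lub_in_def)
  moreover have "is_glb_in DM_carrier (\<subseteq>) {?A', DM_compl c (LB {c y})} (?A' \<inter> LB {y})"
    using is_glb_in_DM_carrier[OF A', of "LB {y}"] by (simp add: DM_compl_LB_singleton)
  moreover have "is_lub_in DM_carrier (\<subseteq>) {?A' \<inter> LB {y}, LB {c y}} (LB (UB ?B))"
    by (rule is_lub_in_DM_carrier)
  ultimately have "LB (UB ?B) = ?A'"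
    by (rule orthomodular_lattice_onD[OF law A' LB_in_DM_carrier])
  then have "UB ?B = UB ?A'"
    by (metis UB_LB_UB)
  also have "\<dots> = c ` A"
    using UB_DM_compl[OF A(1)] .
  finally show ?thesis .
qed

lemma pseudo_orthomodular_if_orthomodular_DM:
  assumes law: "orthomodular_lattice_on DM_carrier (\<subseteq>) (DM_compl c)"
  shows "pseudo_orthomodular c"
  unfolding pseudo_orthomodular_def
proof (intro allI equalityI)
  fix x y :: 'a
  let ?A = "LB {x, y}"
  show "?A \<subseteq> LB (UB (?A \<union> {c y}) \<union> {y})"
    by (auto simp: LB_def UB_def)
  have A: "UB ((DM_compl c ?A \<inter> LB {y}) \<union> LB {c y}) = c ` ?A"
    by (rule UB_eq_image_compl_if_orthomodular_DM[OF law LB_in_DM_carrier]) (auto simp: LB_def)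
  show "LB (UB (?A \<union> {c y}) \<union> {y}) \<subseteq> ?A"
  proof
    fix r assume r: "r \<in> LB (UB (?A \<union> {c y}) \<union> {y})"
    have "w \<le> c r" if "w \<in> (DM_compl c ?A \<inter> LB {y}) \<union> LB {c y}" for w
    proof -
      from that consider "w \<le> c y" | g where "g \<in> UB ?A" "w = c g" "w \<le> y"
        by (auto simp: DM_compl_eq LB_def)
      then show ?thesis
      proof cases
        case 1
        moreover have "r \<le> y" using r by (auto simp: LB_def)
        ultimately show ?thesis by (meson compl_le_compl_iff order_trans)
      next
        case 2
        then have "g \<in> UB (?A \<union> {c y})"
          using compl_le_swap by (auto simp: UB_def)
        then have "r \<le> g" using r by (auto simp: LB_def)
        then show ?thesis using 2 by simp
      qed
    qed
    then have "c r \<in> c ` ?A"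
      using A by (auto simp: UB_def)
    then show "r \<in> ?A"
      using inj_compl by (simp add: inj_image_mem_iff)
  qed
qed

end

locale orthocomplete_atomic_poset = complemented_poset +
  assumes orthocomplete: "orthocomplete c" and atomic: "atomic z"
begin

text \<open>The join of a maximal orthogonal set of atoms below \<open>M\<close>.\<close>
lemma ex_orthogonally_maximal_lower_bound: "\<exists>s\<in>LB M. LB M \<inter> LB {c s} \<subseteq> {z}"
proof -
  obtain S where S: "S \<subseteq> LB M \<inter> Collect (is_atom z)" "orthogonal_set c S"
    and S_max: "\<forall>a\<in>LB M. is_atom z a \<longrightarrow> (\<forall>r\<in>S. a \<le> c r) \<longrightarrow> a \<in> S"
    using ex_maximal_orthogonal_atoms[of "LB M"] by blast
  obtain s where s: "is_lub_in UNIV (\<le>) S s"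
    using orthocomplete S(2) unfolding orthocomplete_def by blast
  have "s \<in> LB M"
    using s S(1) by (auto simp: is_lub_in_def LB_def)
  moreover have "w = z" if w: "w \<in> LB M" "w \<le> c s" for w
  proof (rule ccontr)
    assume "w \<noteq> z"
    then obtain a where a: "is_atom z a" "a \<le> w"
      using atomic bot_le unfolding atomic_def by (metis order_less_le)
    have "a \<le> c s" using a(2) w(2) by simp
    have "a \<in> LB M" using a(2) w(1) by (auto simp: LB_def)
    moreover have "a \<le> c r" if "r \<in> S" for r
      using s that \<open>a \<le> c s\<close> by (auto simp: is_lub_in_def intro: order_trans)
    ultimately have "a \<le> s"
      using S_max a(1) s by (auto simp: is_lub_in_def)
    then show False
      using atom_not_le_compl a(1) \<open>a \<le> c s\<close> by blast
  qed
  ultimately show ?thesis by (auto simp: LB_def)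
qed

lemma pseudo_orthomodular_ex_inf_pair:
  fixes x y :: 'a
  assumes po: "pseudo_orthomodular c"
    and orth_join: "\<And>x y. x \<le> c y \<Longrightarrow> \<exists>j. is_lub_in UNIV (\<le>) {x, y} j"
  shows "\<exists>s. is_glb_in UNIV (\<le>) {x, y} s"
proof -
  define W where "W = LB {x, y}"
  obtain s where "s \<in> W" and s_max: "W \<inter> LB {c s} \<subseteq> {z}"
    using ex_orthogonally_maximal_lower_bound unfolding W_def by blast
  then have "s \<le> y" by (auto simp: W_def LB_def)
  then obtain v where v: "is_lub_in UNIV (\<le>) {s, c y} v"
    using orth_join[of s "c y"] by auto
  have "s \<le> v" "c y \<le> v" using v by (auto simp: is_lub_in_def)
  have "c v \<le> y"
    using \<open>c y \<le> v\<close> compl_le_swap by blast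
  have "q \<le> v" if "q \<in> W" for q
  proof (rule le_if_orthogonal_part_of_join_trivial[OF po])
    have "UB (W \<union> {c y}) \<subseteq> UB {v, q}"
      using v \<open>s \<in> W\<close> \<open>q \<in> W\<close> by (auto simp: UB_def is_lub_in_def)
    then have "LB (UB {v, q}) \<inter> LB {y} \<subseteq> W"
      using LB_antimono pseudo_orthomodularD[OF po, of x y] unfolding W_def LB_Un by blast
    moreover have "LB {c v} \<subseteq> LB {y} \<inter> LB {c s}"
      using \<open>c v \<le> y\<close> \<open>s \<le> v\<close> by simp
    ultimately show "LB (UB {v, q}) \<inter> LB {c v} \<subseteq> {z}"
      using s_max by blast
  qed
  then have "W \<subseteq> LB {v, y}"
    by (auto simp: W_def LB_def)
  also have "\<dots> = LB {s}"
    using pseudo_orthomodular_LB_sup_compl[OF po \<open>s \<le> y\<close> v] .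
  finally have "LB {x, y} = LB {s}"
    using \<open>s \<in> W\<close> by (auto simp: W_def LB_def intro: order_trans)
  then show ?thesis by (auto simp: is_glb_in_UNIV_iff)
qed

lemma ex_inf_if_orthomodular_law:
  fixes N :: "'a set"
  assumes inf_pair: "\<And>x y :: 'a. \<exists>m. is_glb_in UNIV (\<le>) {x, y} m"
    and law: "orthomodular_lattice_on UNIV (\<le>) c"
  shows "\<exists>s. is_glb_in UNIV (\<le>) N s"
proof -
  obtain s where "s \<in> LB N" and s_max: "LB N \<inter> LB {c s} \<subseteq> {z}"
    using ex_orthogonally_maximal_lower_bound by blast
  have "q \<le> s" if "q \<in> LB N" for q
  proof -
    obtain j where j: "is_lub_in UNIV (\<le>) {q, s} j"
      using inf_pair[of "c q" "c s"] by (auto simp: is_glb_iff_is_lub_compl)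
    obtain m where m: "is_glb_in UNIV (\<le>) {j, c s} m"
      using inf_pair by blast
    have "j \<in> LB N"
      using j \<open>q \<in> LB N\<close> \<open>s \<in> LB N\<close> by (auto simp: is_lub_in_def LB_def)
    then have "m \<in> LB N \<inter> LB {c s}"
      using m by (auto simp: is_glb_in_def LB_def intro: order_trans)
    then have "is_lub_in UNIV (\<le>) {m, s} s"
      using s_max bot_le by (auto simp: is_lub_in_def)
    then have "s = j"
      using orthomodular_lattice_onD[OF law UNIV_I UNIV_I j m] by simp
    then show "q \<le> s"
      using j by (auto simp: is_lub_in_def)
  qed
  then have "is_glb_in UNIV (\<le>) N s"
    using \<open>s \<in> LB N\<close> by (auto simp: is_glb_in_def LB_def)
  then show ?thesis ..
qed

end

theorem theorem6:
  fixes cmp :: "'a::order \<Rightarrow> 'a" and bot0 top1 :: 'a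
  assumes "orthomodular_poset cmp bot0 top1"
    and "orthocomplete cmp"
    and "atomic bot0"
  shows "(pseudo_orthomodular cmp
            \<longleftrightarrow> (complete_lattice_poset TYPE('a) \<and> orthomodular_lattice_on UNIV (\<le>) cmp))
       \<and> ((complete_lattice_poset TYPE('a) \<and> orthomodular_lattice_on UNIV (\<le>) cmp)
            \<longleftrightarrow> orthomodular_lattice_on DM_carrier (\<subseteq>) (DM_compl cmp))"
proof -
  interpret orthocomplete_atomic_poset cmp bot0 top1
    using assms by unfold_locales (simp_all add: orthomodular_poset_def)
  have orth_join: "\<And>x y. x \<le> cmp y \<Longrightarrow> \<exists>j. is_lub_in UNIV (\<le>) {x, y} j"
    using assms(1) by (simp add: orthomodular_poset_def is_join_def)
  have "complete_lattice_poset TYPE('a) \<and> orthomodular_lattice_on UNIV (\<le>) cmp"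
    if po: "pseudo_orthomodular cmp"
  proof
    show law: "orthomodular_lattice_on UNIV (\<le>) cmp"
      using po by (rule orthomodular_lattice_if_pseudo_orthomodular)
    show "complete_lattice_poset TYPE('a)"
      using complete_lattice_posetI ex_inf_if_orthomodular_law
        pseudo_orthomodular_ex_inf_pair[OF po orth_join] law by blast
  qed
  then show ?thesis
    using orthomodular_DM_if_complete pseudo_orthomodular_if_orthomodular_DM by blast
qed

end
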